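(* Assume the setting in the context (including conditions (1) and (2) on $\theta_i$) with $\gamma\le1$. Let $\epsilon,\eta\ge0$ and suppose $\tilde x\in\tilde{\mathcal{X}}$ is an $\epsilon$-PNE of $\tilde\Gamma$ satisfying the $\eta$-stability condition with respect to a generator profile $(Z(i,\tilde x))_i$, where $Z(i,\tilde x)=\{x_i^1,\dots,x_i^{d+1}\}$ with corresponding weights $\alpha(i,\tilde x)=(\alpha_i^l)_{l=1}^{d+1}$. Let the players choose random actions $X_i$ independently, with $\mathbb{P}(X_i=x_i^l)=\alpha_i^l$. Then for every $i\in N$, $$\mathbb{E}[f_i(X_i,X_{-i})]\le\mathbb{E}[f_i(x_i,X_{-i})]+\check\epsilon\quad\text{for all }x_i\in\mathcal{X}_i,$$ where $\check\epsilon=\epsilon+\eta+2H\big(\frac{(\sqrt n+1)M\Delta}{n}\big)^\gamma$; i.e. this profile of mixed strategies is an $\check\epsilon$-mixed Nash equilibrium of $\Gamma$.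
   Context: Setting: $N=\{1,\dots,n\}$; for each $i$, $\mathcal{X}_i\subset\mathbb{R}^d$ nonempty, closed, bounded, with diameter $\le\Delta$; $\tilde{\mathcal{X}}_i=\operatorname{conv}(\mathcal{X}_i)$; $\tilde{\mathcal{X}}=\prod_i\tilde{\mathcal{X}}_i$, $\tilde{\mathcal{X}}_{-i}=\prod_{j\ne i}\tilde{\mathcal{X}}_j$. $A_j$ real $q\times d$ matrices with $\|A_j\|_2\le M$. $\Omega\subset\mathbb{R}^q$ a neighborhood of $\{\frac1n\sum_jA_jy_j:y_j\in\tilde{\mathcal{X}}_j\}$; $\theta_i:\mathcal{X}_i\times\Omega\to\mathbb{R}$ with (1) $\theta_i(\cdot,y)$ lower semicontinuous on $\mathcal{X}_i$, (2) $|\theta_i(x_i,y')-\theta_i(x_i,y)|\le H\|y'-y\|^\gamma$ for all $i,x_i,y,y'$ ($H,\gamma>0$). Game $\Gamma$ costs: $f_i(x_i,x_{-i})=\theta_i(x_i,\frac1n\sum_jA_jx_j)$, $x_i\in\mathcal{X}_i$, $x_{-i}\in\tilde{\mathcal{X}}_{-i}$. Convexified game $\tilde\Gamma$: action sets $\tilde{\mathcal{X}}_i$, costs $\tilde f_i(x_i,x_{-i})=\inf\{\sum_{k=1}^{d+1}\alpha^kf_i(z^k,x_{-i}):\alpha\in\mathcal{S}_d,z^k\in\mathcal{X}_i,x_i=\sum_k\alpha^kz^k\}$ ($\mathcal{S}_d$ the probability simplex of $\mathbb{R}^{d+1}$). A generator for $(i,x)$ is a set $Z(i,x)=\{z^1,\ldots,z^{d+1}\}\subset\mathcal{X}_i$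 with weights $\alpha(i,x)\in\mathcal{S}_d$ attaining this infimum. An $\epsilon$-PNE of $\tilde\Gamma$: $x\in\tilde{\mathcal{X}}$ with $\tilde f_i(x_i,x_{-i})\le\tilde f_i(y_i,x_{-i})+\epsilon$ for all $i$, $y_i\in\tilde{\mathcal{X}}_i$. $\eta$-stability with respect to $(Z(i,x))_i$: $\tilde f_i(y_i,x_{-i})\le\tilde f_i(x_i,x_{-i})+\eta$ for all $i$, $y_i\in Z(i,x)$. *)

theory Defs
  imports "HOL-Analysis.Analysis"
begin

definition lsc_on :: "'a::metric_space set \<Rightarrow> ('a \<Rightarrow> real) \<Rightarrow> bool" where
  "lsc_on S f \<longleftrightarrow> (\<forall>x\<in>S. \<forall>t. t < f x \<longrightarrow>
      (\<exists>e>0. \<forall>y\<in>S. dist y x < e \<longrightarrow> t < f y))"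

definition simplex_weights :: "nat \<Rightarrow> (nat \<Rightarrow> real) set" where
  "simplex_weights d = {a. (\<forall>k\<le>d. 0 \<le> a k) \<and> (\<Sum>k\<le>d. a k) = 1}"

definition game_cost ::
  "nat \<Rightarrow> (nat \<Rightarrow> real^'d \<Rightarrow> real^'q \<Rightarrow> real) \<Rightarrow> (nat \<Rightarrow> real^'d^'q)
     \<Rightarrow> nat \<Rightarrow> (nat \<Rightarrow> real^'d) \<Rightarrow> real" where
  "game_cost n \<theta> A i x = \<theta> i (x i) ((1 / real n) *\<^sub>R (\<Sum>j\<in>{1..n}. A j *v x j))"

text \<open>Convexified cost tilde f_i(y, x_{-i}) (the i-th component of x is ignored),
  with d+1 = CARD('d)+1 generator points indexed by {0..CARD('d)}.\<close>
definition conv_cost ::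
  "nat \<Rightarrow> (nat \<Rightarrow> real^'d \<Rightarrow> real^'q \<Rightarrow> real) \<Rightarrow> (nat \<Rightarrow> real^'d^'q)
     \<Rightarrow> (nat \<Rightarrow> (real^'d) set) \<Rightarrow> nat \<Rightarrow> real^'d \<Rightarrow> (nat \<Rightarrow> real^'d) \<Rightarrow> real" where
  "conv_cost n \<theta> A X i y x =
     Inf {(\<Sum>k\<le>CARD('d). a k * game_cost n \<theta> A i (x(i := z k))) | a z.
            a \<in> simplex_weights CARD('d) \<and> (\<forall>k\<le>CARD('d). z k \<in> X i)
            \<and> y = (\<Sum>k\<le>CARD('d). a k *\<^sub>R z k)}"

text \<open>Expectation E[g(X)] where players j in 1..n choose independently the random
  action X_j = z j l with probability a j l, l in {0..CARD('d)}; written as the explicit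
  finite sum over all index profiles l (so repeated generator points are handled correctly).\<close>
definition mixed_expect ::
  "nat \<Rightarrow> (nat \<Rightarrow> nat \<Rightarrow> real^'d) \<Rightarrow> (nat \<Rightarrow> nat \<Rightarrow> real)
     \<Rightarrow> ((nat \<Rightarrow> real^'d) \<Rightarrow> real) \<Rightarrow> real" where
  "mixed_expect n z a g =
     (\<Sum>l\<in>PiE {1..n} (\<lambda>_. {..CARD('d)}).
        (\<Prod>j\<in>{1..n}. a j (l j)) * g (\<lambda>j. z j (l j)))"

end

theory Submission
  imports Defs
begin

text \<open>Write \<delta> for the expected Hoelder error \<open>E |aggregate(X) - aggregate(xt)|^\<gamma>\<close>
  made by replacing the random actions of the other players by their barycentres xt.
  Conditioning on player i's own action gives \<open>E f_i(X) \<le> \<Sum>_l \<alpha>_i^l f_i(x_i^l, xt_{-i}) + H \<delta>\<close>,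
  and the right-hand sum is the convexified cost of xt_i because the generator is optimal.
  The \<epsilon>-equilibrium property, together with the trivial generator of a pure action x,
  bounds it by \<open>f_i(x, xt_{-i}) + \<epsilon>\<close>, and the Hoelder condition returns to
  \<open>E f_i(x, X_{-i})\<close> at another cost of \<open>H \<delta>\<close>.
  The deviations \<open>A_j (X_j - xt_j)\<close> are independent and centred, so the second moment of
  their mean is at most \<open>(M \<Delta>)^2 / n\<close>; Jensen's inequality for the concave map
  \<open>t \<mapsto> t^(\<gamma>/2)\<close> then gives \<open>\<delta> \<le> (M \<Delta> / sqrt n)^\<gamma>\<close>.\<close>

lemma sum_PiE_split:
  assumes "finite I" "i \<in> I" "\<And>j. j \<in> I \<Longrightarrow> finite (S j)"
  shows "(\<Sum>l\<in>PiE I S. F l) = (\<Sum>s\<in>S i. \<Sum>m\<in>PiE (I - {i}) S. F (m(i := s)))"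
proof -
  have "(\<Sum>l\<in>PiE I S. F l) = (\<Sum>l\<in>PiE (insert i (I - {i})) S. F l)"
    using assms(2) by (simp add: insert_absorb)
  also have "\<dots> = (\<Sum>(s, m)\<in>S i \<times> PiE (I - {i}) S. F (m(i := s)))"
    unfolding PiE_insert_eq by (subst sum.reindex[OF inj_combinator]) (auto simp: comp_def case_prod_beta)
  also have "\<dots> = (\<Sum>s\<in>S i. \<Sum>m\<in>PiE (I - {i}) S. F (m(i := s)))"
    by (rule sum.cartesian_product[symmetric])
  finally show ?thesis .
qed

lemma mixed_expect_add:
  "mixed_expect n z a (\<lambda>Y. f Y + g Y) = mixed_expect n z a f + mixed_expect n z a g"
  unfolding mixed_expect_def by (simp add: distrib_left sum.distrib)

lemma mixed_expect_cmult: "mixed_expect n z a (\<lambda>Y. c * f Y) = c * mixed_expect n z a f"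
  unfolding mixed_expect_def by (simp add: sum_distrib_left algebra_simps)

lemma mixed_expect_sum:
  "mixed_expect n z a (\<lambda>Y. \<Sum>s\<in>T. f s Y) = (\<Sum>s\<in>T. mixed_expect n z a (f s))"
  unfolding mixed_expect_def by (simp add: sum_distrib_left sum.swap[of _ T])

lemma power2_powr_half: "0 \<le> t \<Longrightarrow> (t\<^sup>2) powr (p / 2) = t powr (p :: real)"
  by (simp add: powr_powr flip: powr_numeral)

lemma divide_sqrt_le:
  fixes t c :: real
  assumes "0 < t" "0 \<le> c"
  shows "c / sqrt t \<le> (sqrt t + 1) * c / t"
proof -
  have "c / sqrt t = sqrt t * c / (sqrt t * sqrt t)"
    by (rule real_divide_square_eq[symmetric])
  also have "\<dots> = sqrt t * c / t"
    using assms by simp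
  also have "\<dots> \<le> (sqrt t + 1) * c / t"
    using assms by (intro divide_right_mono mult_right_mono) auto
  finally show ?thesis .
qed

lemma weighted_sum_powr_le:
  fixes w g :: "'i \<Rightarrow> real"
  assumes "finite S" and w: "\<And>l. l \<in> S \<Longrightarrow> 0 \<le> w l" "(\<Sum>l\<in>S. w l) = 1"
    and g: "\<And>l. l \<in> S \<Longrightarrow> 0 \<le> g l" and p: "0 < p" "p \<le> 1"
  shows "(\<Sum>l\<in>S. w l * g l powr p) \<le> (\<Sum>l\<in>S. w l * g l) powr p"
proof -
  define c where "c = (\<Sum>l\<in>S. w l * g l)"
  have "c \<ge> 0"
    unfolding c_def using w g by (intro sum_nonneg) auto
  then consider "c = 0" | "c > 0" by linarith
  then show ?thesis
  proof cases
    case 1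
    then have "w l * g l = 0" if "l \<in> S" for l
      using \<open>finite S\<close> w g that unfolding c_def by (simp add: sum_nonneg_eq_0_iff)
    then have "(\<Sum>l\<in>S. w l * g l powr p) = 0"
      by (auto intro!: sum.neutral)
    then show ?thesis
      using 1 by (simp add: c_def[symmetric])
  next
    case 2
    text \<open>Concavity of t powr p, via the tangent line at c.\<close>
    have tangent: "g l powr p \<le> c powr p * (p * (g l / c) + (1 - p))" if "l \<in> S" for l
    proof (cases "g l = 0")
      case False
      then have "(g l / c) powr p * 1 powr (1 - p) \<le> p * (g l / c) + (1 - p) * 1"
        using g[OF that] 2 p by (intro Youngs_inequality_0) auto
      then show ?thesis
        using g[OF that] 2 by (simp add: powr_divide field_simps)
    qed (use 2 p in auto)
    have "(\<Sum>l\<in>S. w l * g l powr p) \<le> (\<Sum>l\<in>S. w l * (c powr p * (p * (g l / c) + (1 - p))))"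
      by (intro sum_mono mult_left_mono tangent w)
    also have "\<dots> = (\<Sum>l\<in>S. c powr p * (p / c * (w l * g l) + (1 - p) * w l))"
      by (intro sum.cong) (auto simp: algebra_simps)
    also have "\<dots> = c powr p * (p / c * (\<Sum>l\<in>S. w l * g l) + (1 - p) * (\<Sum>l\<in>S. w l))"
      by (simp add: sum_distrib_left sum.distrib distrib_left)
    also have "\<dots> = c powr p"
      using 2 w by (simp add: c_def[symmetric])
    finally show ?thesis
      by (simp add: c_def)
  qed
qed

locale mixed_strategy_profile =
  fixes n :: nat and z :: "nat \<Rightarrow> nat \<Rightarrow> real^'d" and a :: "nat \<Rightarrow> nat \<Rightarrow> real"
  assumes weights: "\<And>j. j \<in> {1..n} \<Longrightarrow> a j \<in> simplex_weights CARD('d)"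
begin

abbreviation E :: "((nat \<Rightarrow> real^'d) \<Rightarrow> real) \<Rightarrow> real" where
  "E \<equiv> mixed_expect n z a"

abbreviation support :: "(nat \<Rightarrow> real^'d) set" where
  "support \<equiv> \<Pi> j\<in>{1..n}. z j ` {..CARD('d)}"

lemma weight_nonneg: "j \<in> {1..n} \<Longrightarrow> l \<le> CARD('d) \<Longrightarrow> 0 \<le> a j l"
  using weights by (auto simp: simplex_weights_def)

lemma weight_sum: "j \<in> {1..n} \<Longrightarrow> (\<Sum>l\<le>CARD('d). a j l) = 1"
  using weights by (auto simp: simplex_weights_def)

lemma profile_weight_nonneg:
  "l \<in> PiE {1..n} (\<lambda>_. {..CARD('d)}) \<Longrightarrow> 0 \<le> (\<Prod>j\<in>{1..n}. a j (l j))"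
  by (intro prod_nonneg) (auto simp: PiE_iff weight_nonneg)

lemma profile_weight_sum:
  "(\<Sum>l\<in>PiE {1..n} (\<lambda>_. {..CARD('d)}). \<Prod>j\<in>{1..n}. a j (l j)) = 1"
  by (subst prod_sum_PiE[symmetric]) (auto simp: weight_sum)

lemma mixed_expect_const: "E (\<lambda>_. c) = c"
  unfolding mixed_expect_def sum_distrib_right[symmetric] profile_weight_sum by simp

lemma mixed_expect_mono:
  assumes "\<And>Y. Y \<in> support \<Longrightarrow> f Y \<le> g Y"
  shows "E f \<le> E g"
  unfolding mixed_expect_def
  by (intro sum_mono mult_left_mono profile_weight_nonneg assms) (auto simp: PiE_iff)

lemma mixed_expect_nonneg: "(\<And>Y. Y \<in> support \<Longrightarrow> 0 \<le> f Y) \<Longrightarrow> 0 \<le> E f"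
  using mixed_expect_mono[of "\<lambda>_. 0" f] by (simp add: mixed_expect_const)

lemma mixed_expect_condition:
  assumes i: "i \<in> {1..n}"
  shows "E g = (\<Sum>s\<le>CARD('d). a i s * E (\<lambda>Y. g (Y(i := z i s))))"
proof -
  let ?J = "{1..n} - {i}" and ?S = "\<lambda>_::nat. {..CARD('d)}"
  define marginal where "marginal h =
      (\<Sum>m\<in>PiE ?J ?S. (\<Prod>j\<in>?J. a j (m j)) * h (\<lambda>j. z j (m j)))" for h
  have split: "E h = (\<Sum>s\<le>CARD('d). a i s * marginal (\<lambda>Y. h (Y(i := z i s))))" for h
  proof -
    have "(\<Prod>j\<in>{1..n}. a j ((m(i := s)) j)) = a i s * (\<Prod>j\<in>?J. a j (m j))" for m s
    proof -
      have "(\<Prod>j\<in>{1..n}. a j ((m(i := s)) j)) = a i s * (\<Prod>j\<in>?J. a j ((m(i := s)) j))"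
        using i by (simp add: prod.remove)
      also have "(\<Prod>j\<in>?J. a j ((m(i := s)) j)) = (\<Prod>j\<in>?J. a j (m j))"
        by (rule prod.cong) auto
      finally show ?thesis .
    qed
    moreover have "(\<lambda>j. z j ((m(i := s)) j)) = (\<lambda>j. z j (m j))(i := z i s)" for m s
      by auto
    moreover have "(\<Sum>l\<in>PiE {1..n} ?S. F l) = (\<Sum>s\<le>CARD('d). \<Sum>m\<in>PiE ?J ?S. F (m(i := s)))"
      for F :: "(nat \<Rightarrow> nat) \<Rightarrow> real"
      using i by (intro sum_PiE_split) auto
    ultimately show ?thesis
      unfolding mixed_expect_def marginal_def by (simp only: sum_distrib_left mult.assoc)
  qed
  have "E (\<lambda>Y. g (Y(i := z i s))) = marginal (\<lambda>Y. g (Y(i := z i s)))" for s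
    unfolding split[of "\<lambda>Y. g (Y(i := z i s))"]
    by (simp add: weight_sum[OF i] flip: sum_distrib_right)
  then show ?thesis
    by (simp add: split[of g])
qed

lemma mixed_expect_powr_le:
  assumes "\<And>Y. Y \<in> support \<Longrightarrow> 0 \<le> g Y" and "0 < p" "p \<le> 1"
  shows "E (\<lambda>Y. g Y powr p) \<le> E g powr p"
  unfolding mixed_expect_def mult.assoc[symmetric]
  using assms by (intro weighted_sum_powr_le profile_weight_nonneg profile_weight_sum)
    (auto simp: PiE_iff intro: finite_PiE)

lemma mixed_expect_inner_centered:
  fixes W :: "(nat \<Rightarrow> real^'d) \<Rightarrow> 'b::real_inner" and v :: "real^'d \<Rightarrow> 'b"
  assumes k: "k \<in> {1..n}" and W: "\<And>Y w. W (Y(k := w)) = W Y"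
    and centered: "(\<Sum>l\<le>CARD('d). a k l *\<^sub>R v (z k l)) = 0"
  shows "E (\<lambda>Y. W Y \<bullet> v (Y k)) = 0"
proof -
  have "E (\<lambda>Y. W Y \<bullet> v (Y k)) = (\<Sum>l\<le>CARD('d). a k l * E (\<lambda>Y. W Y \<bullet> v (z k l)))"
    by (subst mixed_expect_condition[OF k]) (simp add: W)
  also have "\<dots> = E (\<lambda>Y. W Y \<bullet> (\<Sum>l\<le>CARD('d). a k l *\<^sub>R v (z k l)))"
    by (simp add: inner_sum_right mixed_expect_sum flip: mixed_expect_cmult)
  finally show ?thesis
    by (simp add: centered mixed_expect_const)
qed

text \<open>Independent centred summands are orthogonal in L2.\<close>
lemma mixed_expect_norm_sum_squared:
  fixes v :: "nat \<Rightarrow> real^'d \<Rightarrow> 'b::real_inner"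
  assumes J: "J \<subseteq> {1..n}"
    and centered: "\<And>j. j \<in> J \<Longrightarrow> (\<Sum>l\<le>CARD('d). a j l *\<^sub>R v j (z j l)) = 0"
  shows "E (\<lambda>Y. (norm (\<Sum>j\<in>J. v j (Y j)))\<^sup>2) = (\<Sum>j\<in>J. E (\<lambda>Y. (norm (v j (Y j)))\<^sup>2))"
proof -
  have "finite J"
    using J finite_subset by blast
  then show ?thesis
    using J centered
  proof (induction J rule: finite_induct)
    case empty
    then show ?case
      by (simp add: mixed_expect_const)
  next
    case (insert k J)
    let ?W = "\<lambda>Y. \<Sum>j\<in>J. v j (Y j)"
    have "E (\<lambda>Y. ?W Y \<bullet> v k (Y k)) = 0"
      using insert by (intro mixed_expect_inner_centered) (auto intro: sum.cong)
    moreover have "(norm (\<Sum>j\<in>insert k J. v j (Y j)))\<^sup>2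
        = (norm (?W Y))\<^sup>2 + 2 * (?W Y \<bullet> v k (Y k)) + (norm (v k (Y k)))\<^sup>2" for Y
      using insert by (simp add: power2_norm_eq_inner inner_add_left inner_add_right inner_commute)
    ultimately show ?case
      using insert by (simp add: mixed_expect_add mixed_expect_cmult)
  qed
qed

end

lemma lsc_on_compact_bdd_below:
  assumes "compact S" and "lsc_on S f"
  shows "bdd_below (f ` S)"
proof -
  have "\<forall>x\<in>S. \<exists>e>0. \<forall>y\<in>S. dist y x < e \<longrightarrow> f x - 1 < f y"
    using assms(2) by (auto simp: lsc_on_def)
  then obtain e where e_pos: "\<And>x. x \<in> S \<Longrightarrow> e x > 0"
    and e: "\<And>x y. x \<in> S \<Longrightarrow> y \<in> S \<Longrightarrow> dist y x < e x \<Longrightarrow> f x - 1 < f y"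
    by metis
  obtain C where C: "C \<subseteq> S" "finite C" "S \<subseteq> (\<Union>c\<in>C. ball c (e c))"
  proof (rule compactE_image[OF \<open>compact S\<close>])
    show "S \<subseteq> (\<Union>c\<in>S. ball c (e c))"
      using e_pos by force
  qed simp_all
  show ?thesis
  proof (rule bdd_belowI2)
    fix y assume "y \<in> S"
    then obtain c where c: "c \<in> C" "dist y c < e c"
      using C(3) by (auto simp: dist_commute)
    then have "Min ((\<lambda>c. f c - 1) ` C) \<le> f c - 1"
      using C(2) by simp
    also have "\<dots> < f y"
      using c C(1) \<open>y \<in> S\<close> by (intro e) auto
    finally show "Min ((\<lambda>c. f c - 1) ` C) \<le> f y"
      by simp
  qed
qed

definition aggregate :: "nat \<Rightarrow> (nat \<Rightarrow> real^'d^'q) \<Rightarrow> (nat \<Rightarrow> real^'d) \<Rightarrow> real^'q" where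
  "aggregate n A Y = (1 / real n) *\<^sub>R (\<Sum>j\<in>{1..n}. A j *v Y j)"

lemma game_cost_aggregate: "game_cost n \<theta> A i Y = \<theta> i (Y i) (aggregate n A Y)"
  unfolding game_cost_def aggregate_def ..

lemma aggregate_diff:
  "aggregate n A Y - aggregate n A Y' = (1 / real n) *\<^sub>R (\<Sum>j\<in>{1..n}. A j *v (Y j - Y' j))"
  by (simp add: aggregate_def sum_subtractf matrix_vector_mult_diff_distrib flip: scaleR_diff_right)

lemma aggregate_diff_fix_own:
  assumes "i \<in> {1..n}"
  shows "aggregate n A (Y(i := c)) - aggregate n A (Y'(i := c))
    = (1 / real n) *\<^sub>R (\<Sum>j\<in>{1..n} - {i}. A j *v (Y j - Y' j))"
proof -
  have "(\<Sum>j\<in>{1..n} - {i}. A j *v ((Y(i := c)) j - (Y'(i := c)) j))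
      = (\<Sum>j\<in>{1..n} - {i}. A j *v (Y j - Y' j))"
    by (intro sum.cong) auto
  then show ?thesis
    unfolding aggregate_diff sum.remove[OF finite_atLeastAtMost assms] by simp
qed

lemma aggregate_diff_fix_others:
  assumes "i \<in> {1..n}"
  shows "aggregate n A (Y(i := c)) - aggregate n A Y = (1 / real n) *\<^sub>R (A i *v (c - Y i))"
proof -
  have "(\<Sum>j\<in>{1..n} - {i}. A j *v ((Y(i := c)) j - Y j)) = 0"
    by (intro sum.neutral) auto
  then show ?thesis
    unfolding aggregate_diff sum.remove[OF finite_atLeastAtMost assms] by simp
qed

lemma conv_cost_le_game_cost:
  fixes X :: "nat \<Rightarrow> (real^'d) set"
  assumes bdd: "bdd_below ((\<lambda>w. game_cost n \<theta> A i (Y(i := w))) ` X i)" and "x \<in> X i"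
  shows "conv_cost n \<theta> A X i x Y \<le> game_cost n \<theta> A i (Y(i := x))"
proof -
  let ?f = "\<lambda>w. game_cost n \<theta> A i (Y(i := w))"
  obtain m where m: "\<And>w. w \<in> X i \<Longrightarrow> m \<le> ?f w"
    using bdd by (auto simp: bdd_below_def)
  have combination_ge: "m \<le> (\<Sum>k\<le>CARD('d). c k * ?f (z k))"
    if "c \<in> simplex_weights CARD('d)" "\<forall>k\<le>CARD('d). z k \<in> X i" for c z
  proof -
    have "m = (\<Sum>k\<le>CARD('d). c k * m)"
      using that(1) by (simp add: simplex_weights_def flip: sum_distrib_right)
    also have "\<dots> \<le> (\<Sum>k\<le>CARD('d). c k * ?f (z k))"
      using that by (intro sum_mono mult_left_mono m) (auto simp: simplex_weights_def)
    finally show ?thesis .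
  qed
  text \<open>x is generated by itself: all weight on one copy of x.\<close>
  define c :: "nat \<Rightarrow> real" where "c k = (if k = 0 then 1 else 0)" for k
  have c: "c \<in> simplex_weights CARD('d)"
    by (simp add: c_def simplex_weights_def)
  have x_comb: "(\<Sum>k\<le>CARD('d). c k *\<^sub>R x) = x"
    by (simp add: c_def if_distrib[of "\<lambda>t. t *\<^sub>R x"] cong: if_cong)
  have f_comb: "(\<Sum>k\<le>CARD('d). c k * ?f x) = ?f x"
    using c by (simp add: simplex_weights_def flip: sum_distrib_right)
  show ?thesis
    unfolding conv_cost_def
  proof (intro cInf_lower)
    show "bdd_below {(\<Sum>k\<le>CARD('d). c k * ?f (z k)) | c z.
        c \<in> simplex_weights CARD('d) \<and> (\<forall>k\<le>CARD('d). z k \<in> X i)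
        \<and> x = (\<Sum>k\<le>CARD('d). c k *\<^sub>R z k)}"
      using combination_ge by (intro bdd_belowI[of _ m]) blast
    show "?f x \<in> {(\<Sum>k\<le>CARD('d). c k * ?f (z k)) | c z.
        c \<in> simplex_weights CARD('d) \<and> (\<forall>k\<le>CARD('d). z k \<in> X i)
        \<and> x = (\<Sum>k\<le>CARD('d). c k *\<^sub>R z k)}"
      using c x_comb f_comb \<open>x \<in> X i\<close> by (intro CollectI exI[of _ c] exI[of _ "\<lambda>_. x"]) simp
  qed
qed

locale aggregative_game =
  fixes n :: nat and X :: "nat \<Rightarrow> (real^'d) set" and A :: "nat \<Rightarrow> real^'d^'q"
    and \<theta> :: "nat \<Rightarrow> real^'d \<Rightarrow> real^'q \<Rightarrow> real" and \<Omega> :: "(real^'q) set"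
    and \<Delta> M H \<gamma> :: real
  assumes n_pos: "n \<ge> 1"
    and X_compact: "\<And>i. i \<in> {1..n} \<Longrightarrow> compact (X i)"
    and X_diam: "\<And>i. i \<in> {1..n} \<Longrightarrow> diameter (X i) \<le> \<Delta>"
    and A_norm: "\<And>j. j \<in> {1..n} \<Longrightarrow> onorm (\<lambda>v. A j *v v) \<le> M"
    and aggregate_in_\<Omega>: "\<And>Y. Y \<in> (\<Pi> j\<in>{1..n}. convex hull (X j)) \<Longrightarrow> aggregate n A Y \<in> \<Omega>"
    and \<theta>_lsc: "\<And>i y. i \<in> {1..n} \<Longrightarrow> y \<in> \<Omega> \<Longrightarrow> lsc_on (X i) (\<lambda>xi. \<theta> i xi y)"
    and H_nonneg: "H \<ge> 0" and \<gamma>_pos: "\<gamma> > 0" and \<gamma>_le1: "\<gamma> \<le> 1"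
    and \<theta>_hoelder: "\<And>i xi y y'. i \<in> {1..n} \<Longrightarrow> xi \<in> X i \<Longrightarrow> y \<in> \<Omega> \<Longrightarrow> y' \<in> \<Omega> \<Longrightarrow>
        \<bar>\<theta> i xi y' - \<theta> i xi y\<bar> \<le> H * dist y' y powr \<gamma>"
begin

abbreviation convexified_profiles :: "(nat \<Rightarrow> real^'d) set" where
  "convexified_profiles \<equiv> \<Pi> j\<in>{1..n}. convex hull (X j)"

lemma M_nonneg: "0 \<le> M"
  using A_norm[of 1] onorm_pos_le[of "(*v) (A 1)"] n_pos by auto

lemma \<Delta>_nonneg: "0 \<le> \<Delta>"
  using diameter_ge_0[OF compact_imp_bounded[OF X_compact[of 1]]] X_diam[of 1] n_pos by auto

lemma norm_matrix_diff_le: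
  assumes j: "j \<in> {1..n}" and "w \<in> X j" "y \<in> convex hull (X j)"
  shows "norm (A j *v (w - y)) \<le> M * \<Delta>"
proof -
  have "X j \<subseteq> cball w \<Delta>"
    using diameter_bounded_bound[OF compact_imp_bounded[OF X_compact[OF j]] \<open>w \<in> X j\<close>] X_diam[OF j]
    by (force simp: subset_iff)
  then have "convex hull (X j) \<subseteq> cball w \<Delta>"
    by (intro hull_minimal) auto
  then have "norm (w - y) \<le> \<Delta>"
    using \<open>y \<in> convex hull (X j)\<close> by (auto simp: dist_norm)
  have "norm (A j *v (w - y)) \<le> onorm ((*v) (A j)) * norm (w - y)"
    by (rule onorm) simp
  also have "\<dots> \<le> M * \<Delta>"
    using A_norm[OF j] \<open>norm (w - y) \<le> \<Delta>\<close> M_nonneg by (intro mult_mono) auto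
  finally show ?thesis .
qed

lemma update_convexified:
  "Y \<in> convexified_profiles \<Longrightarrow> c \<in> X i \<Longrightarrow> Y(i := c) \<in> convexified_profiles"
  by (auto simp: Pi_iff intro: hull_inc)

lemma game_cost_update_hoelder:
  assumes "i \<in> {1..n}" "c \<in> X i" "Y \<in> convexified_profiles" "Y' \<in> convexified_profiles"
  shows "\<bar>game_cost n \<theta> A i (Y(i := c)) - game_cost n \<theta> A i (Y'(i := c))\<bar>
    \<le> H * dist (aggregate n A (Y(i := c))) (aggregate n A (Y'(i := c))) powr \<gamma>"
  using assms update_convexified
  by (simp add: game_cost_aggregate \<theta>_hoelder aggregate_in_\<Omega>)

lemma game_cost_update_bdd_below:
  assumes i: "i \<in> {1..n}" and Y: "Y \<in> convexified_profiles"
  shows "bdd_below ((\<lambda>w. game_cost n \<theta> A i (Y(i := w))) ` X i)"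
proof -
  obtain m where m: "\<And>w. w \<in> X i \<Longrightarrow> m \<le> \<theta> i w (aggregate n A Y)"
    using lsc_on_compact_bdd_below[OF X_compact[OF i] \<theta>_lsc[OF i aggregate_in_\<Omega>[OF Y]]]
    by (auto simp: bdd_below_def)
  have "m - H * (M * \<Delta> / n) powr \<gamma> \<le> game_cost n \<theta> A i (Y(i := w))" if w: "w \<in> X i" for w
  proof -
    have "dist (aggregate n A (Y(i := w))) (aggregate n A Y) = norm (A i *v (w - Y i)) / n"
      by (simp add: dist_norm aggregate_diff_fix_others[OF i] divide_inverse_commute)
    also have "\<dots> \<le> M * \<Delta> / n"
      using norm_matrix_diff_le[OF i w Pi_mem[OF Y i]] by (intro divide_right_mono) auto
    finally have "H * dist (aggregate n A (Y(i := w))) (aggregate n A Y) powr \<gamma> \<le> H * (M * \<Delta> / n) powr \<gamma>"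
      using H_nonneg \<gamma>_pos by (intro mult_left_mono powr_mono2) auto
    then show ?thesis
      using \<theta>_hoelder[OF i w aggregate_in_\<Omega>[OF Y] aggregate_in_\<Omega>[OF update_convexified[OF Y w]]] m[OF w]
      by (simp add: game_cost_aggregate abs_le_iff)
  qed
  then show ?thesis
    by (rule bdd_belowI2)
qed

end

locale generator_profile =
  aggregative_game n X A \<theta> \<Omega> \<Delta> M H \<gamma> + mixed_strategy_profile n z a
  for n and X :: "nat \<Rightarrow> (real^'d) set" and A :: "nat \<Rightarrow> real^'d^'q" and \<theta> \<Omega> \<Delta> M H \<gamma>
    and z :: "nat \<Rightarrow> nat \<Rightarrow> real^'d" and a +
  fixes xt :: "nat \<Rightarrow> real^'d"
  assumes generators_in: "\<And>j l. j \<in> {1..n} \<Longrightarrow> l \<le> CARD('d) \<Longrightarrow> z j l \<in> X j"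
    and xt_convex_combination: "\<And>j. j \<in> {1..n} \<Longrightarrow> xt j = (\<Sum>l\<le>CARD('d). a j l *\<^sub>R z j l)"
begin

lemma support_in_X: "Y \<in> support \<Longrightarrow> j \<in> {1..n} \<Longrightarrow> Y j \<in> X j"
  using generators_in by (auto dest!: Pi_mem)

lemma support_subset_convexified: "support \<subseteq> convexified_profiles"
  using support_in_X by (auto intro: hull_inc)

lemma xt_convexified: "xt \<in> convexified_profiles"
proof
  fix j assume j: "j \<in> {1..n}"
  show "xt j \<in> convex hull (X j)"
    unfolding xt_convex_combination[OF j]
    using weight_sum[OF j] weight_nonneg[OF j] generators_in[OF j]
    by (intro convex_sum) (auto intro: hull_inc)
qed

definition deviation :: "nat \<Rightarrow> (nat \<Rightarrow> real^'d) \<Rightarrow> real^'q" where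
  "deviation i Y = (1 / real n) *\<^sub>R (\<Sum>j\<in>{1..n} - {i}. A j *v (Y j - xt j))"

lemma game_cost_deviation:
  assumes "i \<in> {1..n}" "c \<in> X i" "Y \<in> support"
  shows "\<bar>game_cost n \<theta> A i (Y(i := c)) - game_cost n \<theta> A i (xt(i := c))\<bar>
    \<le> H * norm (deviation i Y) powr \<gamma>"
  using game_cost_update_hoelder[OF assms(1,2) _ xt_convexified] support_subset_convexified assms(3)
  by (auto simp: dist_norm aggregate_diff_fix_own[OF assms(1)] deviation_def)

lemma expected_cost_le_generator_cost:
  assumes i: "i \<in> {1..n}"
  shows "E (game_cost n \<theta> A i) \<le> (\<Sum>l\<le>CARD('d). a i l * game_cost n \<theta> A i (xt(i := z i l)))
    + H * E (\<lambda>Y. norm (deviation i Y) powr \<gamma>)"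
proof -
  let ?\<delta> = "E (\<lambda>Y. norm (deviation i Y) powr \<gamma>)"
  have "E (\<lambda>Y. game_cost n \<theta> A i (Y(i := z i l))) \<le> game_cost n \<theta> A i (xt(i := z i l)) + H * ?\<delta>"
    if l: "l \<le> CARD('d)" for l
  proof -
    have "game_cost n \<theta> A i (Y(i := z i l))
        \<le> game_cost n \<theta> A i (xt(i := z i l)) + H * norm (deviation i Y) powr \<gamma>"
      if "Y \<in> support" for Y
      using game_cost_deviation[OF i generators_in[OF i l] that] by (simp add: abs_le_iff)
    then have "E (\<lambda>Y. game_cost n \<theta> A i (Y(i := z i l)))
        \<le> E (\<lambda>Y. game_cost n \<theta> A i (xt(i := z i l)) + H * norm (deviation i Y) powr \<gamma>)"
      by (rule mixed_expect_mono)
    then show ?thesis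
      by (simp add: mixed_expect_add mixed_expect_cmult mixed_expect_const)
  qed
  then have "E (game_cost n \<theta> A i)
      \<le> (\<Sum>l\<le>CARD('d). a i l * (game_cost n \<theta> A i (xt(i := z i l)) + H * ?\<delta>))"
    unfolding mixed_expect_condition[OF i, of "game_cost n \<theta> A i"]
    by (intro sum_mono mult_left_mono) (auto simp: weight_nonneg[OF i])
  then show ?thesis
    by (simp add: distrib_left sum.distrib weight_sum[OF i] flip: sum_distrib_right)
qed

lemma game_cost_le_expected_cost:
  assumes "i \<in> {1..n}" "c \<in> X i"
  shows "game_cost n \<theta> A i (xt(i := c))
    \<le> E (\<lambda>Y. game_cost n \<theta> A i (Y(i := c))) + H * E (\<lambda>Y. norm (deviation i Y) powr \<gamma>)"
proof -
  have "game_cost n \<theta> A i (xt(i := c)) \<le> game_cost n \<theta> A i (Y(i := c)) + H * norm (deviation i Y) powr \<gamma>"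
    if "Y \<in> support" for Y
    using game_cost_deviation[OF assms that] by (simp add: abs_le_iff)
  then have "E (\<lambda>_. game_cost n \<theta> A i (xt(i := c)))
      \<le> E (\<lambda>Y. game_cost n \<theta> A i (Y(i := c)) + H * norm (deviation i Y) powr \<gamma>)"
    by (rule mixed_expect_mono)
  then show ?thesis
    by (simp add: mixed_expect_add mixed_expect_cmult mixed_expect_const)
qed

lemma expected_deviation_le:
  assumes i: "i \<in> {1..n}"
  shows "E (\<lambda>Y. norm (deviation i Y) powr \<gamma>) \<le> (M * \<Delta> / sqrt n) powr \<gamma>"
proof -
  let ?v = "\<lambda>j w. A j *v (w - xt j)"
  have centered: "(\<Sum>l\<le>CARD('d). a j l *\<^sub>R ?v j (z j l)) = 0" if j: "j \<in> {1..n}" for j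
  proof -
    have "(\<Sum>l\<le>CARD('d). a j l *\<^sub>R ?v j (z j l))
        = A j *v ((\<Sum>l\<le>CARD('d). a j l *\<^sub>R z j l) - (\<Sum>l\<le>CARD('d). a j l) *\<^sub>R xt j)"
      by (simp add: matrix_vector_mult_diff_distrib matrix_vector_mult_scaleR sum_subtractf
          scaleR_diff_right linear_sum[OF matrix_vector_mul_linear] scaleR_sum_left)
    then show ?thesis
      by (simp add: weight_sum[OF j] xt_convex_combination[OF j])
  qed
  have bounded: "E (\<lambda>Y. (norm (?v j (Y j)))\<^sup>2) \<le> (M * \<Delta>)\<^sup>2" if j: "j \<in> {1..n}" for j
  proof -
    have "E (\<lambda>Y. (norm (?v j (Y j)))\<^sup>2) \<le> E (\<lambda>_. (M * \<Delta>)\<^sup>2)"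
      using norm_matrix_diff_le[OF j support_in_X[OF _ j] Pi_mem[OF xt_convexified j]]
      by (intro mixed_expect_mono power_mono) auto
    then show ?thesis
      by (simp add: mixed_expect_const)
  qed
  have "E (\<lambda>Y. (norm (deviation i Y))\<^sup>2) = (1 / n)\<^sup>2 * E (\<lambda>Y. (norm (\<Sum>j\<in>{1..n} - {i}. ?v j (Y j)))\<^sup>2)"
    by (simp add: deviation_def power_divide flip: mixed_expect_cmult)
  also have "\<dots> = (1 / n)\<^sup>2 * (\<Sum>j\<in>{1..n} - {i}. E (\<lambda>Y. (norm (?v j (Y j)))\<^sup>2))"
    using centered by (subst mixed_expect_norm_sum_squared) auto
  also have "\<dots> \<le> (1 / n)\<^sup>2 * (n * (M * \<Delta>)\<^sup>2)"
  proof -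
    have "(\<Sum>j\<in>{1..n} - {i}. E (\<lambda>Y. (norm (?v j (Y j)))\<^sup>2)) \<le> card ({1..n} - {i}) * (M * \<Delta>)\<^sup>2"
      using bounded by (intro sum_bounded_above) auto
    also have "\<dots> \<le> n * (M * \<Delta>)\<^sup>2"
      using card_Diff1_le[of "{1..n}" i] by (intro mult_right_mono) auto
    finally show ?thesis
      by (intro mult_left_mono) auto
  qed
  also have "\<dots> = (M * \<Delta> / sqrt n)\<^sup>2"
    using n_pos by (simp add: power_divide power2_eq_square)
  finally have second_moment: "E (\<lambda>Y. (norm (deviation i Y))\<^sup>2) \<le> (M * \<Delta> / sqrt n)\<^sup>2" .
  have "E (\<lambda>Y. norm (deviation i Y) powr \<gamma>) = E (\<lambda>Y. ((norm (deviation i Y))\<^sup>2) powr (\<gamma> / 2))"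
    by (simp add: power2_powr_half)
  also have "\<dots> \<le> E (\<lambda>Y. (norm (deviation i Y))\<^sup>2) powr (\<gamma> / 2)"
    using \<gamma>_pos \<gamma>_le1 by (intro mixed_expect_powr_le) auto
  also have "\<dots> \<le> ((M * \<Delta> / sqrt n)\<^sup>2) powr (\<gamma> / 2)"
    using second_moment \<gamma>_pos
    by (intro powr_mono2 mixed_expect_nonneg) auto
  also have "\<dots> = (M * \<Delta> / sqrt n) powr \<gamma>"
    using M_nonneg \<Delta>_nonneg by (simp add: power2_powr_half)
  finally show ?thesis .
qed

end

theorem proposition3:
  fixes n :: nat
    and X :: "nat \<Rightarrow> (real^'d) set"
    and A :: "nat \<Rightarrow> real^'d^'q"
    and \<theta> :: "nat \<Rightarrow> real^'d \<Rightarrow> real^'q \<Rightarrow> real"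
    and \<Omega> :: "(real^'q) set"
    and \<Delta> M H \<gamma> \<epsilon> \<eta> :: real
    and xt :: "nat \<Rightarrow> real^'d"
    and z :: "nat \<Rightarrow> nat \<Rightarrow> real^'d"
    and a :: "nat \<Rightarrow> nat \<Rightarrow> real"
  assumes n_pos: "n \<ge> 1"
    and X_ne: "\<And>i. i \<in> {1..n} \<Longrightarrow> X i \<noteq> {}"
    and X_closed: "\<And>i. i \<in> {1..n} \<Longrightarrow> closed (X i)"
    and X_bounded: "\<And>i. i \<in> {1..n} \<Longrightarrow> bounded (X i)"
    and X_diam: "\<And>i. i \<in> {1..n} \<Longrightarrow> diameter (X i) \<le> \<Delta>"
    and A_norm: "\<And>j. j \<in> {1..n} \<Longrightarrow> onorm (\<lambda>v. A j *v v) \<le> M"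
    and \<Omega>_open: "open \<Omega>"
    and \<Omega>_nbhd: "{(1 / real n) *\<^sub>R (\<Sum>j\<in>{1..n}. A j *v y j) | y.
                    \<forall>j\<in>{1..n}. y j \<in> convex hull (X j)} \<subseteq> \<Omega>"
    and \<theta>_lsc: "\<And>i y. i \<in> {1..n} \<Longrightarrow> y \<in> \<Omega> \<Longrightarrow> lsc_on (X i) (\<lambda>xi. \<theta> i xi y)"
    and H_pos: "H > 0" and \<gamma>_pos: "\<gamma> > 0" and \<gamma>_le1: "\<gamma> \<le> 1"
    and \<theta>_hoelder: "\<And>i xi y y'. i \<in> {1..n} \<Longrightarrow> xi \<in> X i \<Longrightarrow> y \<in> \<Omega> \<Longrightarrow> y' \<in> \<Omega> \<Longrightarrow>
        \<bar>\<theta> i xi y' - \<theta> i xi y\<bar> \<le> H * dist y' y powr \<gamma>"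
    and eps_nn: "\<epsilon> \<ge> 0" and eta_nn: "\<eta> \<ge> 0"
    \<comment> \<open>xt is an epsilon-PNE of the convexified game\<close>
    and xt_in: "\<And>i. i \<in> {1..n} \<Longrightarrow> xt i \<in> convex hull (X i)"
    and xt_PNE: "\<And>i y. i \<in> {1..n} \<Longrightarrow> y \<in> convex hull (X i) \<Longrightarrow>
        conv_cost n \<theta> A X i (xt i) xt \<le> conv_cost n \<theta> A X i y xt + \<epsilon>"
    \<comment> \<open>(z i l, a i l)_{l = 0..d} is a generator for (i, xt)\<close>
    and gen_pts: "\<And>i l. i \<in> {1..n} \<Longrightarrow> l \<le> CARD('d) \<Longrightarrow> z i l \<in> X i"
    and gen_wts: "\<And>i. i \<in> {1..n} \<Longrightarrow> a i \<in> simplex_weights CARD('d)"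
    and gen_comb: "\<And>i. i \<in> {1..n} \<Longrightarrow> xt i = (\<Sum>l\<le>CARD('d). a i l *\<^sub>R z i l)"
    and gen_opt: "\<And>i. i \<in> {1..n} \<Longrightarrow>
        conv_cost n \<theta> A X i (xt i) xt
          = (\<Sum>l\<le>CARD('d). a i l * game_cost n \<theta> A i (xt(i := z i l)))"
    \<comment> \<open>eta-stability with respect to the generators\<close>
    and stable: "\<And>i l. i \<in> {1..n} \<Longrightarrow> l \<le> CARD('d) \<Longrightarrow>
        conv_cost n \<theta> A X i (z i l) xt \<le> conv_cost n \<theta> A X i (xt i) xt + \<eta>"
  shows "\<forall>i\<in>{1..n}. \<forall>x\<in>X i.
           mixed_expect n z a (game_cost n \<theta> A i)
             \<le> mixed_expect n z a (\<lambda>Y. game_cost n \<theta> A i (Y(i := x)))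
                + (\<epsilon> + \<eta> + 2 * H * (((sqrt (real n) + 1) * M * \<Delta>) / real n) powr \<gamma>)"
proof (intro ballI)
  fix i x assume i: "i \<in> {1..n}" and x: "x \<in> X i"
  interpret generator_profile n X A \<theta> \<Omega> \<Delta> M H \<gamma> z a xt
    using assms by unfold_locales
      (auto simp: compact_eq_bounded_closed aggregate_def Pi_iff intro!: subsetD[OF \<Omega>_nbhd])
  define \<delta> where "\<delta> = E (\<lambda>Y. norm (deviation i Y) powr \<gamma>)"
  have "E (game_cost n \<theta> A i) \<le> conv_cost n \<theta> A X i (xt i) xt + H * \<delta>"
    using expected_cost_le_generator_cost[OF i] by (simp add: gen_opt[OF i] \<delta>_def)
  moreover have "conv_cost n \<theta> A X i (xt i) xt \<le> conv_cost n \<theta> A X i x xt + \<epsilon>"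
    using xt_PNE[OF i hull_inc[OF x]] .
  moreover have "conv_cost n \<theta> A X i x xt \<le> game_cost n \<theta> A i (xt(i := x))"
    by (intro conv_cost_le_game_cost game_cost_update_bdd_below i xt_convexified x)
  moreover have "game_cost n \<theta> A i (xt(i := x)) \<le> E (\<lambda>Y. game_cost n \<theta> A i (Y(i := x))) + H * \<delta>"
    using game_cost_le_expected_cost[OF i x] by (simp add: \<delta>_def)
  moreover have "H * \<delta> \<le> H * (((sqrt n + 1) * M * \<Delta>) / n) powr \<gamma>"
  proof -
    have "\<delta> \<le> (M * \<Delta> / sqrt n) powr \<gamma>"
      using expected_deviation_le[OF i] by (simp add: \<delta>_def)
    also have "\<dots> \<le> (((sqrt n + 1) * M * \<Delta>) / n) powr \<gamma>"
      using divide_sqrt_le[of n "M * \<Delta>"] n_pos M_nonneg \<Delta>_nonneg \<gamma>_pos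
      by (intro powr_mono2) (auto simp: mult.assoc)
    finally show ?thesis
      using H_pos by (intro mult_left_mono) auto
  qed
  ultimately show "E (game_cost n \<theta> A i) \<le> E (\<lambda>Y. game_cost n \<theta> A i (Y(i := x)))
      + (\<epsilon> + \<eta> + 2 * H * (((sqrt (real n) + 1) * M * \<Delta>) / real n) powr \<gamma>)"
    using eta_nn by linarith
qed

end
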